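(* Let $h_\bullet=(h_0,h_1,\ldots)$ be a sequence of nonnegative integers with $h_0=1$. Then $h_\bullet$ is unimodal at each tail if and only if there exist a field $k$, a polynomial ring $R=k[x_1,\ldots,x_n]$ and an almost reverse lexicographic ideal $I\subset R$ with $H(R/I,d)=h_d$ for all $d\ge0$.
   Context: $H(R/I,d)=\dim_k(R/I)_d$. Degree reverse lexicographic order: for $M=x^\alpha,N=x^\beta$, $M>N$ iff $\deg M>\deg N$, or degrees are equal and for the largest $s$ with $\alpha_s\neq\beta_s$ one has $\alpha_s<\beta_s$. A monomial ideal $I$ is almost reverse lexicographic if for every monomial $M$ and every minimal monomial generator $N$ of $I$ with $\deg M=\deg N$ and $M>N$, $M\in I$ (the zero ideal counts). For $h_\bullet$ with $h_0=1$: $h^{(0)}_\bullet=h_\bullet$ and, for $1\le i<h_1$, $h^{(i)}_0=1$, $h^{(i)}_d=\max\{0,h^{(i-1)}_d-h^{(i-1)}_{d-1}\}$ for $d\ge1$. For $0\le i<\max\{1,h_1\}$, $r_i=\min\{d\ge1:h^{(i)}_d\le h^{(i)}_{d-1}\}$ ($\infty$ if none), and $D(h_\bullet)=\min\{i:r_i<\infty\}$. Unimodal at each tail: for every $i$ with $D(h_\bullet)\le i<\max\{1,h_1\}$, $h^{(i)}_d\le h^{(i)}_{d-1}$ for all $d\ge r_i$. *)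

theory Defs
  imports Main
begin

text \<open>Monomials of k[x_1,...,x_n] are encoded by exponent vectors
  alpha :: nat => nat with alpha i = 0 for i >= n (variable x_(i+1) has index i).
  A monomial ideal I of R is encoded by the set of monomials it contains;
  it is the k-span of these monomials.\<close>

definition mons :: "nat \<Rightarrow> (nat \<Rightarrow> nat) set" where
  "mons n = {\<alpha>. \<forall>i\<ge>n. \<alpha> i = 0}"

definition mdeg :: "nat \<Rightarrow> (nat \<Rightarrow> nat) \<Rightarrow> nat" where
  "mdeg n \<alpha> = (\<Sum>i<n. \<alpha> i)"

definition mdvd :: "(nat \<Rightarrow> nat) \<Rightarrow> (nat \<Rightarrow> nat) \<Rightarrow> bool" where
  "mdvd \<alpha> \<beta> \<longleftrightarrow> (\<forall>i. \<alpha> i \<le> \<beta> i)"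

definition monomial_ideal :: "nat \<Rightarrow> (nat \<Rightarrow> nat) set \<Rightarrow> bool" where
  "monomial_ideal n I \<longleftrightarrow> I \<subseteq> mons n \<and>
     (\<forall>\<alpha>\<in>I. \<forall>\<beta>\<in>mons n. mdvd \<alpha> \<beta> \<longrightarrow> \<beta> \<in> I)"

definition min_gen :: "(nat \<Rightarrow> nat) set \<Rightarrow> (nat \<Rightarrow> nat) \<Rightarrow> bool" where
  "min_gen I N \<longleftrightarrow> N \<in> I \<and> (\<forall>M\<in>I. mdvd M N \<longrightarrow> M = N)"

definition revlex_gt :: "nat \<Rightarrow> (nat \<Rightarrow> nat) \<Rightarrow> (nat \<Rightarrow> nat) \<Rightarrow> bool" where
  "revlex_gt n \<alpha> \<beta> \<longleftrightarrow> mdeg n \<alpha> > mdeg n \<beta> \<or>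
     (mdeg n \<alpha> = mdeg n \<beta> \<and>
      (\<exists>s<n. \<alpha> s \<noteq> \<beta> s \<and> (\<forall>t. s < t \<and> t < n \<longrightarrow> \<alpha> t = \<beta> t) \<and> \<alpha> s < \<beta> s))"

definition almost_revlex :: "nat \<Rightarrow> (nat \<Rightarrow> nat) set \<Rightarrow> bool" where
  "almost_revlex n I \<longleftrightarrow> monomial_ideal n I \<and>
     (\<forall>M\<in>mons n. \<forall>N. min_gen I N \<longrightarrow> mdeg n M = mdeg n N \<longrightarrow> revlex_gt n M N \<longrightarrow> M \<in> I)"

text \<open>H(R/I,d) = dim_k (R/I)_d = number of degree-d monomials not in I.\<close>
definition hilb :: "nat \<Rightarrow> (nat \<Rightarrow> nat) set \<Rightarrow> nat \<Rightarrow> nat" where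
  "hilb n I d = card {\<alpha> \<in> mons n. mdeg n \<alpha> = d \<and> \<alpha> \<notin> I}"

text \<open>The sequences h^(i); on nat, max{0, a - b} is truncated subtraction a - b.\<close>
fun hder :: "(nat \<Rightarrow> nat) \<Rightarrow> nat \<Rightarrow> nat \<Rightarrow> nat" where
  "hder h 0 = h"
| "hder h (Suc i) = (\<lambda>d. if d = 0 then 1 else hder h i d - hder h i (d - 1))"

text \<open>r_i < infinity, and its value.\<close>
definition r_fin :: "(nat \<Rightarrow> nat) \<Rightarrow> nat \<Rightarrow> bool" where
  "r_fin h i \<longleftrightarrow> (\<exists>d\<ge>1. hder h i d \<le> hder h i (d - 1))"

definition r_val :: "(nat \<Rightarrow> nat) \<Rightarrow> nat \<Rightarrow> nat" where
  "r_val h i = (LEAST d. d \<ge> 1 \<and> hder h i d \<le> hder h i (d - 1))"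

definition D_idx :: "(nat \<Rightarrow> nat) \<Rightarrow> nat" where
  "D_idx h = (LEAST i. i < max 1 (h 1) \<and> r_fin h i)"

definition unimodal_at_each_tail :: "(nat \<Rightarrow> nat) \<Rightarrow> bool" where
  "unimodal_at_each_tail h \<longleftrightarrow>
     (\<forall>i. D_idx h \<le> i \<and> i < max 1 (h 1) \<longrightarrow> r_fin h i \<longrightarrow>
        (\<forall>d\<ge>r_val h i. hder h i d \<le> hder h i (d - 1)))"

end

theory Submission
  imports Defs
begin

text \<open>Let \<open>I\<close> be almost reverse lexicographic in \<open>k + 1\<close> variables and let \<open>J\<close> consist of
  its monomials not involving the last variable. A minimal generator divisible by the last
  variable forces every monomial of its degree in the first \<open>k\<close> variables into \<open>I\<close>. Hence
  multiplication by the last variable is injective on standard monomials of degree \<open>d\<close>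
  as long as \<open>J\<close> has standard monomials in degree \<open>d + 1\<close>: the first difference
  \<open>h\<^sup>(\<^sup>1\<^sup>)\<close> of \<open>h = H(R/I)\<close> is the Hilbert function of \<open>J\<close>, and once \<open>h\<close> fails to
  increase it never increases again. Induction on the number of variables makes every
  \<open>h\<^sup>(\<^sup>i\<^sup>)\<close> unimodal in this sense.

  Conversely, realize \<open>h\<^sup>(\<^sup>1\<^sup>)\<close> by induction with an ideal \<open>J\<close> in \<open>h\<^sub>1 - 1\<close> variables
  and lift it: up to the peak of \<open>h\<close> the standard monomials are those whose part in the
  first variables is standard for \<open>J\<close>; in a degree \<open>d\<close> beyond the peak they are the
  appropriate power of the last variable times the \<open>h\<^sub>d\<close> reverse lexicographically
  smallest standard monomials of peak degree.\<close>

section \<open>Monomials\<close>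

lemma mdeg_Suc: "mdeg (Suc k) a = mdeg k a + a k"
  by (simp add: mdeg_def)

lemma mdeg_fun_upd_ge: "n \<le> j \<Longrightarrow> mdeg n (a(j := v)) = mdeg n a"
  unfolding mdeg_def by (rule sum.cong) auto

lemma mdeg_fun_upd_last: "mdeg (Suc k) (a(k := v)) = mdeg k a + v"
  by (simp add: mdeg_Suc mdeg_fun_upd_ge)

lemma mdeg_fun_upd: "j < n \<Longrightarrow> mdeg n (a(j := v)) + a j = mdeg n a + v"
  unfolding mdeg_def by (simp add: sum.remove[of "{..<n}" j])

lemma member_le_mdeg: "i < n \<Longrightarrow> a i \<le> mdeg n a"
  unfolding mdeg_def by (rule member_le_sum) auto

lemma mdvd_imp_mdeg_le: "mdvd a b \<Longrightarrow> mdeg n a \<le> mdeg n b"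
  unfolding mdvd_def mdeg_def by (simp add: sum_mono)

lemma mdvd_fun_upd_Suc: "mdvd a (a(j := Suc (a j)))"
  unfolding mdvd_def by auto

lemma mdvd_fun_upd_pred: "mdvd (a(j := a j - 1)) a"
  unfolding mdvd_def by auto

lemma mons_Suc_iff: "a \<in> mons (Suc k) \<longleftrightarrow> a(k := 0) \<in> mons k"
  unfolding mons_def by auto

lemma mons_Suc_mono: "a \<in> mons k \<Longrightarrow> a \<in> mons (Suc k)"
  unfolding mons_def by auto

lemma mons_eq_0: "a \<in> mons k \<Longrightarrow> k \<le> i \<Longrightarrow> a i = 0"
  unfolding mons_def by auto

lemma mons_Suc_last_eq_0: "a \<in> mons (Suc k) \<Longrightarrow> a \<in> mons k \<longleftrightarrow> a k = 0"
  unfolding mons_def using Suc_leI le_neq_implies_less by blast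

lemma mons_fun_upd: "j < n \<Longrightarrow> a \<in> mons n \<Longrightarrow> a(j := v) \<in> mons n"
  unfolding mons_def by auto

lemma mons_nonzero_less: "a \<in> mons n \<Longrightarrow> a j \<noteq> 0 \<Longrightarrow> j < n"
  by (rule ccontr) (auto simp: mons_def)

lemma finite_mons_deg: "finite {a \<in> mons n. mdeg n a = d}"
proof (rule finite_subset)
  show "{a \<in> mons n. mdeg n a = d} \<subseteq>
      {f. \<forall>x. (x \<in> {..<n} \<longrightarrow> f x \<in> {..d}) \<and> (x \<notin> {..<n} \<longrightarrow> f x = 0)}"
    by (auto simp: mons_def dest: member_le_mdeg)
qed (rule finite_set_of_finite_funs; simp)

lemma mdeg_eq_0_iff: "a \<in> mons n \<Longrightarrow> mdeg n a = 0 \<longleftrightarrow> a = (\<lambda>_. 0)"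
  unfolding mons_def mdeg_def by (auto simp: fun_eq_iff) (meson not_less lessThan_iff)

lemma mdeg_neq_0_imp_ex: "mdeg n b \<noteq> 0 \<Longrightarrow> \<exists>j<n. b j \<noteq> 0"
  unfolding mdeg_def by auto

lemma mdvd_mdeg_eq_imp_eq:
  assumes "mdvd a b" "a \<in> mons n" "b \<in> mons n" "mdeg n a = mdeg n b"
  shows "a = b"
proof (rule ccontr)
  assume "a \<noteq> b"
  then obtain i where "a i \<noteq> b i" by blast
  with assms(2,3) have "i < n"
    using mons_nonzero_less[of a n i] mons_nonzero_less[of b n i] by (cases "a i = 0") auto
  moreover from \<open>a i \<noteq> b i\<close> assms(1) have "a i < b i"
    by (simp add: mdvd_def le_neq_implies_less)
  ultimately have "mdeg n a < mdeg n b"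
    using assms(1)
    unfolding mdeg_def mdvd_def by (intro sum_strict_mono_ex1) auto
  with assms(4) show False by simp
qed

lemma monomial_ideal_subset: "monomial_ideal n I \<Longrightarrow> a \<in> I \<Longrightarrow> a \<in> mons n"
  unfolding monomial_ideal_def by auto

lemma monomial_ideal_mdvd:
  "monomial_ideal n I \<Longrightarrow> a \<in> I \<Longrightarrow> b \<in> mons n \<Longrightarrow> mdvd a b \<Longrightarrow> b \<in> I"
  unfolding monomial_ideal_def by auto

lemma min_gen_fun_upd_pred: "min_gen I N \<Longrightarrow> N j \<noteq> 0 \<Longrightarrow> N(j := N j - 1) \<notin> I"
  unfolding min_gen_def by (metis fun_upd_same mdvd_fun_upd_pred diff_less less_numeral_extra(1) neq0_conv less_irrefl)

section \<open>Reverse lexicographic comparison\<close>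

definition rlex_gt :: "nat \<Rightarrow> (nat \<Rightarrow> nat) \<Rightarrow> (nat \<Rightarrow> nat) \<Rightarrow> bool" where
  "rlex_gt n a b \<longleftrightarrow> (\<exists>s<n. a s < b s \<and> (\<forall>t. s < t \<and> t < n \<longrightarrow> a t = b t))"

lemma revlex_gt_iff_rlex_gt: "mdeg n a = mdeg n b \<Longrightarrow> revlex_gt n a b \<longleftrightarrow> rlex_gt n a b"
  unfolding revlex_gt_def rlex_gt_def by auto

lemma rlex_gt_irrefl: "\<not> rlex_gt n a a"
  unfolding rlex_gt_def by auto

lemma rlex_gt_trans:
  assumes "rlex_gt n a b" "rlex_gt n b c"
  shows "rlex_gt n a c"
proof -
  obtain s where s: "s < n" "a s < b s" "\<And>t. s < t \<Longrightarrow> t < n \<Longrightarrow> a t = b t"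
    using assms(1) unfolding rlex_gt_def by auto
  obtain s' where s': "s' < n" "b s' < c s'" "\<And>t. s' < t \<Longrightarrow> t < n \<Longrightarrow> b t = c t"
    using assms(2) unfolding rlex_gt_def by auto
  have "a (max s s') < c (max s s')"
    using s s' by (cases s s' rule: linorder_cases) auto
  moreover have "\<forall>t. max s s' < t \<and> t < n \<longrightarrow> a t = c t"
    using s(3) s'(3) by simp
  ultimately show ?thesis
    unfolding rlex_gt_def using s(1) s'(1) by (metis max_def)
qed

lemma rlex_gt_total:
  assumes "a \<in> mons n" "b \<in> mons n" "a \<noteq> b"
  shows "rlex_gt n a b \<or> rlex_gt n b a"
proof -
  define D where "D = {i. a i \<noteq> b i}"
  have "D \<subseteq> {..<n}"
    using assms(1,2) unfolding D_def mons_def by clarsimp (metis not_less)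
  moreover have "D \<noteq> {}"
    using assms(3) unfolding D_def by auto
  ultimately have "finite D" "Max D \<in> D" "Max D < n"
    using finite_subset by (auto intro: Max_in)
  moreover have "\<forall>t. Max D < t \<and> t < n \<longrightarrow> a t = b t"
    using \<open>finite D\<close> unfolding D_def by (auto dest: Max_ge)
  moreover have "a (Max D) < b (Max D) \<or> b (Max D) < a (Max D)"
    using \<open>Max D \<in> D\<close> unfolding D_def by auto
  ultimately show ?thesis
    unfolding rlex_gt_def by (metis (full_types))
qed

lemma rlex_gt_Suc_last_le: "rlex_gt (Suc k) a b \<Longrightarrow> a k \<le> b k"
  unfolding rlex_gt_def by (metis less_Suc_eq less_or_eq_imp_le)

lemma rlex_gt_Suc_last_less: "a k < b k \<Longrightarrow> rlex_gt (Suc k) a b"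
  unfolding rlex_gt_def by (intro exI[of _ k]) auto

lemma rlex_gt_Suc_iff: "a k = b k \<Longrightarrow> rlex_gt (Suc k) a b \<longleftrightarrow> rlex_gt k a b"
  unfolding rlex_gt_def by (auto simp: less_Suc_eq)

lemma rlex_gt_Suc_fun_upd_last:
  assumes "rlex_gt (Suc k) a b" "e \<le> a k" "e \<le> b k"
  shows "rlex_gt (Suc k) (a(k := a k - e)) (b(k := b k - e))"
proof -
  obtain s where s: "s < Suc k" "a s < b s" "\<forall>t. s < t \<and> t < Suc k \<longrightarrow> a t = b t"
    using assms(1) unfolding rlex_gt_def by blast
  have "(a(k := a k - e)) s < (b(k := b k - e)) s"
    using s(2) assms(2,3) by (cases "s = k") auto
  with s show ?thesis
    unfolding rlex_gt_def by (intro exI[of _ s]) auto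
qed

section \<open>Initial segments of a finite strict total order\<close>

text \<open>In a finite set strictly totally ordered by \<open>R\<close> (with \<open>R a b\<close> read as
  "\<open>a\<close> is above \<open>b\<close>"), the \<open>j\<close> lowest elements are those having fewer than \<open>j\<close>
  elements below them.\<close>

definition rank_below :: "('a \<Rightarrow> 'a \<Rightarrow> bool) \<Rightarrow> 'a set \<Rightarrow> 'a \<Rightarrow> nat" where
  "rank_below R S a = card {b \<in> S. R a b}"

definition lowest :: "('a \<Rightarrow> 'a \<Rightarrow> bool) \<Rightarrow> 'a set \<Rightarrow> nat \<Rightarrow> 'a set" where
  "lowest R S j = {a \<in> S. rank_below R S a < j}"

lemma lowest_subset: "lowest R S j \<subseteq> S"
  unfolding lowest_def by auto

lemma lowest_mono: "i \<le> j \<Longrightarrow> lowest R S i \<subseteq> lowest R S j"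
  unfolding lowest_def by auto

locale finite_strict_total =
  fixes R :: "'a \<Rightarrow> 'a \<Rightarrow> bool" and S :: "'a set"
  assumes finite: "finite S"
    and irrefl: "\<And>a. \<not> R a a"
    and trans: "\<And>a b c. R a b \<Longrightarrow> R b c \<Longrightarrow> R a c"
    and total: "\<And>a b. a \<in> S \<Longrightarrow> b \<in> S \<Longrightarrow> a \<noteq> b \<Longrightarrow> R a b \<or> R b a"
begin

lemma rank_below_less:
  assumes "a \<in> S" "b \<in> S" "R a b"
  shows "rank_below R S b < rank_below R S a"
proof -
  have "{c \<in> S. R b c} \<subseteq> {c \<in> S. R a c}"
    using assms trans by auto
  moreover have "b \<in> {c \<in> S. R a c} - {c \<in> S. R b c}"
    using assms irrefl by auto
  ultimately show ?thesis
    unfolding rank_below_def using finite by (intro psubset_card_mono) auto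
qed

lemma inj_on_rank_below: "inj_on (rank_below R S) S"
proof (rule inj_onI, rule ccontr)
  fix a b
  assume "a \<in> S" "b \<in> S" "rank_below R S a = rank_below R S b" "a \<noteq> b"
  then show False
    using total[of a b] rank_below_less[of a b] rank_below_less[of b a] by auto
qed

lemma rank_below_less_card: "a \<in> S \<Longrightarrow> rank_below R S a < card S"
  unfolding rank_below_def using finite irrefl by (intro psubset_card_mono) auto

lemma rank_below_image: "rank_below R S ` S = {..<card S}"
proof (rule card_subset_eq)
  show "rank_below R S ` S \<subseteq> {..<card S}"
    using rank_below_less_card by auto
qed (simp_all add: card_image inj_on_rank_below)

lemma card_lowest: "card (lowest R S j) = min j (card S)"
proof -
  have "rank_below R S ` lowest R S j = {x \<in> rank_below R S ` S. x < j}"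
    unfolding lowest_def by auto
  also have "\<dots> = {..<min j (card S)}"
    unfolding rank_below_image by auto
  finally have "rank_below R S ` lowest R S j = {..<min j (card S)}" .
  moreover have "inj_on (rank_below R S) (lowest R S j)"
    using inj_on_rank_below lowest_subset by (rule inj_on_subset)
  ultimately show ?thesis
    by (metis card_image card_lessThan)
qed

lemma lowest_down_closed: "a \<in> lowest R S j \<Longrightarrow> c \<in> S \<Longrightarrow> R a c \<Longrightarrow> c \<in> lowest R S j"
  unfolding lowest_def using rank_below_less by fastforce

end

lemma finite_strict_total_rlex_gt: "S \<subseteq> mons n \<Longrightarrow> finite S \<Longrightarrow> finite_strict_total (rlex_gt n) S"
  by unfold_locales (auto simp: rlex_gt_irrefl intro: rlex_gt_trans, meson rlex_gt_total subsetD)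

section \<open>The derived sequences\<close>

definition unimodal :: "(nat \<Rightarrow> nat) \<Rightarrow> bool" where
  "unimodal g \<longleftrightarrow> (\<forall>d e. 1 \<le> d \<longrightarrow> d \<le> e \<longrightarrow> g d \<le> g (d - 1) \<longrightarrow> g e \<le> g (e - 1))"

lemma unimodalD: "unimodal g \<Longrightarrow> 1 \<le> d \<Longrightarrow> g d \<le> g (d - 1) \<Longrightarrow> d \<le> e \<Longrightarrow> g e \<le> g (e - 1)"
  unfolding unimodal_def by blast

lemma hder_Suc_eq: "hder h (Suc i) = hder (hder h 1) i"
  by (induction i) (simp add: fun_eq_iff, simp only: hder.simps)

lemma hder_add: "hder (hder h j) i = hder h (i + j)"
  by (induction i) (auto simp: fun_eq_iff)

lemma hder_at_0: "h 0 = 1 \<Longrightarrow> hder h i 0 = 1"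
  by (cases i) auto

lemma hder_at_1: "h 0 = 1 \<Longrightarrow> hder h i 1 = h 1 - i"
  by (induction i) (auto simp: hder_at_0)

definition delta :: "nat \<Rightarrow> nat" where
  "delta d = (if d = 0 then 1 else 0)"

lemma hder_delta: "hder delta i = delta"
  by (induction i) (auto simp: fun_eq_iff delta_def)

lemma unimodal_delta: "unimodal delta"
  unfolding unimodal_def delta_def by auto

lemma hder_1_eq_delta:
  assumes "unimodal g" "g 1 \<le> g 0"
  shows "hder g 1 = delta"
proof
  fix d
  have "g d \<le> g (d - 1)" if "1 \<le> d"
    using unimodalD[OF assms(1), of 1 d] assms(2) that by simp
  then show "hder g 1 d = delta d"
    by (simp add: delta_def)
qed

lemma unimodal_eq_delta:
  assumes "h 0 = 1" "h 1 = 0" "unimodal h"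
  shows "h = delta"
proof
  fix d
  have "h (Suc e) \<le> h e" for e
    using unimodalD[OF assms(3), of 1 "Suc e"] assms(1,2) by simp
  then have "h (Suc e) \<le> h 1" for e
    by (induction e) (auto intro: order_trans)
  then show "h d = delta d"
    using assms(1,2) by (cases d) (auto simp: delta_def)
qed

lemma unimodal_at_each_tail_iff:
  assumes h0: "h 0 = 1"
  shows "unimodal_at_each_tail h \<longleftrightarrow> (\<forall>i. unimodal (hder h i))"
proof
  assume u: "unimodal_at_each_tail h"
  have small: "unimodal (hder h i)" if i: "i < max 1 (h 1)" for i
    unfolding unimodal_def
  proof (intro allI impI)
    fix d e assume d: "1 \<le> d" "d \<le> e" "hder h i d \<le> hder h i (d - 1)"
    then have "r_fin h i"
      unfolding r_fin_def by blast
    moreover have "D_idx h \<le> i" "r_val h i \<le> d"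
      unfolding D_idx_def r_val_def using i \<open>r_fin h i\<close> d by (auto intro: Least_le)
    ultimately show "hder h i e \<le> hder h i (e - 1)"
      using u i d unfolding unimodal_at_each_tail_def by auto
  qed
  \<comment> \<open>Since \<open>h\<^sup>(\<^sup>q\<^sup>)\<^sub>1 \<le> 1 = h\<^sup>(\<^sup>q\<^sup>)\<^sub>0\<close>, all later derived sequences are trivial.\<close>
  define q where "q = max 1 (h 1) - 1"
  have "hder h (Suc q) = hder (hder h q) 1"
    using hder_add[of h q 1] by simp
  also have "\<dots> = delta"
    using hder_1_eq_delta[OF small] hder_at_1[of h q] hder_at_0[of h q] h0
    unfolding q_def by simp
  finally have "hder h (Suc q) = delta" .
  have "unimodal (hder h i)" if "\<not> i < max 1 (h 1)" for i
  proof -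
    have "i = (i - Suc q) + Suc q"
      using that unfolding q_def by simp
    then have "hder h i = hder delta (i - Suc q)"
      by (metis hder_add \<open>hder h (Suc q) = delta\<close>)
    then show ?thesis
      by (simp add: hder_delta unimodal_delta)
  qed
  with small show "\<forall>i. unimodal (hder h i)"
    by blast
next
  assume all: "\<forall>i. unimodal (hder h i)"
  show "unimodal_at_each_tail h"
    unfolding unimodal_at_each_tail_def
  proof (intro allI impI)
    fix i d assume "r_fin h i" "r_val h i \<le> d"
    moreover have "1 \<le> r_val h i \<and> hder h i (r_val h i) \<le> hder h i (r_val h i - 1)"
      if "r_fin h i"
      using that unfolding r_fin_def r_val_def by (rule LeastI_ex)
    ultimately show "hder h i d \<le> hder h i (d - 1)"
      using unimodalD[OF all[rule_format]] by blast
  qed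
qed

section \<open>Hilbert functions of almost reverse lexicographic ideals\<close>

lemma hilb_0: "hilb n I 0 = (if (\<lambda>_. 0) \<in> I then 0 else 1)"
proof -
  have "(\<lambda>_. 0) \<in> mons n"
    by (simp add: mons_def)
  then have "{a \<in> mons n. mdeg n a = 0 \<and> a \<notin> I} = (if (\<lambda>_. 0) \<in> I then {} else {\<lambda>_. 0})"
    using mdeg_eq_0_iff[of _ n] by auto
  then show ?thesis
    unfolding hilb_def by simp
qed

lemma hilb_eq_0_iff: "hilb n I d = 0 \<longleftrightarrow> (\<forall>b\<in>mons n. mdeg n b = d \<longrightarrow> b \<in> I)"
proof -
  have "finite {a \<in> mons n. mdeg n a = d \<and> a \<notin> I}"
    by (rule finite_subset[OF _ finite_mons_deg[of n d]]) auto
  then show ?thesis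
    unfolding hilb_def by auto
qed

lemma hilb_no_vars: "hilb 0 I 0 = 1 \<Longrightarrow> hilb 0 I = delta"
  by (auto simp: fun_eq_iff hilb_def delta_def mdeg_def)

lemma hilb_Int_mons: "hilb k (I \<inter> mons k) = hilb k I"
  unfolding hilb_def by (intro ext arg_cong[where f = card]) auto

lemma card_mons_Suc_deg_Suc:
  "card {b \<in> mons (Suc k). mdeg (Suc k) b = Suc d \<and> P b} =
   card {b \<in> mons k. mdeg k b = Suc d \<and> P b} +
   card {c \<in> mons (Suc k). mdeg (Suc k) c = d \<and> P (c(k := Suc (c k)))}"
proof -
  let ?A = "{b \<in> mons (Suc k). mdeg (Suc k) b = Suc d \<and> P b}"
  let ?C = "{c \<in> mons (Suc k). mdeg (Suc k) c = d \<and> P (c(k := Suc (c k)))}"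
  have "finite ?A"
    using finite_mons_deg by (rule finite_subset[rotated]) auto
  have "?A \<inter> {b. b k = 0} = {b \<in> mons k. mdeg k b = Suc d \<and> P b}"
  proof (intro set_eqI iffI)
    fix b assume "b \<in> ?A \<inter> {b. b k = 0}"
    then show "b \<in> {b \<in> mons k. mdeg k b = Suc d \<and> P b}"
      using mons_Suc_last_eq_0[of b k] mdeg_Suc[of k b] by simp
  next
    fix b assume "b \<in> {b \<in> mons k. mdeg k b = Suc d \<and> P b}"
    then show "b \<in> ?A \<inter> {b. b k = 0}"
      using mons_Suc_mono[of b k] mons_eq_0[of b k k] mdeg_Suc[of k b] by simp
  qed
  moreover have "card ?C = card (?A - {b. b k = 0})"
  proof (rule bij_betw_same_card, rule bij_betw_byWitness[where f' = "\<lambda>b. b(k := b k - 1)"])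
    show "(\<lambda>c. c(k := Suc (c k))) ` ?C \<subseteq> (?A - {b. b k = 0})"
      using mons_fun_upd[of k "Suc k"] mdeg_fun_upd_last[of k] mdeg_Suc[of k] by auto
    show "(\<lambda>b. b(k := b k - 1)) ` (?A - {b. b k = 0}) \<subseteq> ?C"
      using mons_fun_upd[of k "Suc k"] mdeg_fun_upd_last[of k] mdeg_Suc[of k] by auto
  qed auto
  ultimately show ?thesis
    using card_Int_Diff[OF \<open>finite ?A\<close>, of "{b. b k = 0}"] by simp
qed

lemma almost_revlex_Int_mons:
  assumes ar: "almost_revlex (Suc k) I"
  shows "almost_revlex k (I \<inter> mons k)"
proof -
  have mi: "monomial_ideal (Suc k) I"
    using ar unfolding almost_revlex_def by simp
  then have "monomial_ideal k (I \<inter> mons k)"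
    unfolding monomial_ideal_def by (auto intro: mons_Suc_mono)
  moreover have "M \<in> I"
    if M: "M \<in> mons k" and N: "min_gen (I \<inter> mons k) N"
      and deg: "mdeg k M = mdeg k N" and gt: "revlex_gt k M N" for M N
  proof -
    have "N \<in> mons k"
      using N unfolding min_gen_def by simp
    have "min_gen I N"
      unfolding min_gen_def
    proof (intro conjI ballI impI)
      show "N \<in> I"
        using N unfolding min_gen_def by simp
      fix G assume G: "G \<in> I" "mdvd G N"
      have "G i = 0" if "k \<le> i" for i
        using G(2) mons_eq_0[OF \<open>N \<in> mons k\<close> that] unfolding mdvd_def by (metis le_zero_eq)
      then have "G \<in> mons k"
        unfolding mons_def by blast
      with G N show "G = N"
        unfolding min_gen_def by blast
    qed
    have "M k = 0" "N k = 0"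
      using M \<open>N \<in> mons k\<close> by (auto intro: mons_eq_0)
    then have "mdeg (Suc k) M = mdeg (Suc k) N" "revlex_gt (Suc k) M N"
      using deg gt by (simp_all add: mdeg_Suc revlex_gt_iff_rlex_gt rlex_gt_Suc_iff)
    with \<open>min_gen I N\<close> show "M \<in> I"
      using ar M unfolding almost_revlex_def by (blast intro: mons_Suc_mono)
  qed
  ultimately show ?thesis
    unfolding almost_revlex_def by blast
qed

lemma hilb_Suc_eq_0:
  assumes "monomial_ideal (Suc k) I" "hilb k I d = 0"
  shows "hilb k I (Suc d) = 0"
  unfolding hilb_eq_0_iff
proof (intro ballI impI)
  fix b assume b: "b \<in> mons k" "mdeg k b = Suc d"
  then obtain j where j: "j < k" "b j \<noteq> 0"
    using mdeg_neq_0_imp_ex[of k b] by auto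
  then have "b(j := b j - 1) \<in> I"
    using assms(2) b mdeg_fun_upd[OF j(1), of b "b j - 1"]
    unfolding hilb_eq_0_iff by (simp add: mons_fun_upd)
  then show "b \<in> I"
    using assms(1) b(1) by (blast intro: monomial_ideal_mdvd mons_Suc_mono mdvd_fun_upd_pred)
qed

lemma hilb_eq_0_mono:
  assumes "monomial_ideal (Suc k) I" "hilb k I d = 0" "d \<le> e"
  shows "hilb k I e = 0"
  using assms(3)
proof (induction e)
  case (Suc e)
  then show ?case
    using assms(1,2) hilb_Suc_eq_0 by (cases "d = Suc e") auto
qed (use assms(2) in simp)

lemma hilb_eq_0_if_min_gen_last_var:
  assumes ar: "almost_revlex (Suc k) I" and N: "min_gen I N" "N k \<noteq> 0"
  shows "hilb k I (mdeg (Suc k) N) = 0"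
  unfolding hilb_eq_0_iff
proof (intro ballI impI)
  fix b assume b: "b \<in> mons k" "mdeg k b = mdeg (Suc k) N"
  have "b k = 0"
    using b(1) by (rule mons_eq_0) simp
  then have "mdeg (Suc k) b = mdeg (Suc k) N" "rlex_gt (Suc k) b N"
    using b N(2) by (simp_all add: mdeg_Suc rlex_gt_Suc_last_less)
  then show "b \<in> I"
    using ar N(1) mons_Suc_mono[OF b(1)]
    unfolding almost_revlex_def by (simp add: revlex_gt_iff_rlex_gt)
qed

lemma not_min_gen_mult_last_var:
  assumes mi: "monomial_ideal n I" and m: "m \<in> mons n" "m \<notin> I"
    and G: "G \<in> I" "mdvd G (m(k := Suc (m k)))" "G \<noteq> m(k := Suc (m k))"
  obtains j where "j < n" "j \<noteq> k" "m j \<noteq> 0" "(m(j := m j - 1))(k := Suc (m k)) \<in> I"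
proof -
  have "\<not> mdvd G m"
    using monomial_ideal_mdvd[OF mi G(1) m(1)] m(2) by blast
  with G(2) have Gk: "G k = Suc (m k)"
    unfolding mdvd_def by (metis fun_upd_apply le_SucE)
  from G(3) obtain j where Gj: "G j \<noteq> (m(k := Suc (m k))) j"
    by blast
  with Gk have "j \<noteq> k"
    by auto
  with G(2) Gj have "G j < m j"
    unfolding mdvd_def by (metis fun_upd_other le_neq_implies_less)
  then have mj: "m j \<noteq> 0" "j < n"
    using mons_nonzero_less[OF m(1)] by auto
  have "mdvd G ((m(j := m j - 1))(k := Suc (m k)))"
    unfolding mdvd_def
  proof
    fix i
    show "G i \<le> ((m(j := m j - 1))(k := Suc (m k))) i"
      using G(2)[unfolded mdvd_def, rule_format, of i] \<open>j \<noteq> k\<close> \<open>G j < m j\<close> Gk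
      by (cases "i = k"; cases "i = j") auto
  qed
  moreover have "k < n"
    using monomial_ideal_subset[OF mi G(1)] Gk mons_nonzero_less by auto
  ultimately have "(m(j := m j - 1))(k := Suc (m k)) \<in> I"
    using monomial_ideal_mdvd[OF mi G(1)] m(1) mj(2) by (simp add: mons_fun_upd)
  with \<open>j \<noteq> k\<close> mj show ?thesis
    using that by blast
qed

text \<open>The key property of almost reverse lexicographic ideals: multiplication by the
  last variable is injective on standard monomials of degree \<open>d\<close> unless the first
  \<open>k\<close> variables generate no standard monomial of degree \<open>d + 1\<close>.\<close>
lemma hilb_eq_0_if_mult_last_var_mem:
  assumes ar: "almost_revlex (Suc k) I"
    and "m \<in> mons (Suc k)" "m \<notin> I" "m(k := Suc (m k)) \<in> I"
  shows "hilb k I (Suc (mdeg (Suc k) m)) = 0"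
  using assms(2-)
proof (induction "mdeg (Suc k) m" arbitrary: m rule: less_induct)
  case less
  have mi: "monomial_ideal (Suc k) I"
    using ar unfolding almost_revlex_def by simp
  show ?case
  proof (cases "min_gen I (m(k := Suc (m k)))")
    case True
    then show ?thesis
      using hilb_eq_0_if_min_gen_last_var[OF ar] mdeg_fun_upd_last[of k m] mdeg_Suc[of k m]
      by fastforce
  next
    case False
    then obtain G where "G \<in> I" "mdvd G (m(k := Suc (m k)))" "G \<noteq> m(k := Suc (m k))"
      using less.prems(3) unfolding min_gen_def by blast
    then obtain j where j: "j < Suc k" "j \<noteq> k" "m j \<noteq> 0"
      and mult_mem: "(m(j := m j - 1))(k := Suc (m k)) \<in> I"
      using not_min_gen_mult_last_var[OF mi less.prems(1,2)] by blast
    let ?m = "m(j := m j - 1)"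
    have deg: "Suc (mdeg (Suc k) ?m) = mdeg (Suc k) m"
      using mdeg_fun_upd[OF j(1), of m "m j - 1"] j(3) by simp
    have "?m \<in> mons (Suc k)" "?m \<notin> I" "?m(k := Suc (?m k)) \<in> I"
      using less.prems j mult_mem monomial_ideal_mdvd[OF mi _ less.prems(1) mdvd_fun_upd_pred]
      by (auto simp: mons_fun_upd)
    then have "hilb k I (mdeg (Suc k) m) = 0"
      using less.hyps[of ?m] deg by simp
    then show ?thesis
      by (rule hilb_Suc_eq_0[OF mi])
  qed
qed

lemma hilb_Suc_deg_Suc:
  "hilb (Suc k) I (Suc d) = hilb k I (Suc d) +
     card {c \<in> mons (Suc k). mdeg (Suc k) c = d \<and> c(k := Suc (c k)) \<notin> I}"
  unfolding hilb_def by (rule card_mons_Suc_deg_Suc)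

lemma hilb_Suc_deg_le:
  assumes mi: "monomial_ideal (Suc k) I" and "hilb k I (Suc d) = 0"
  shows "hilb (Suc k) I (Suc d) \<le> hilb (Suc k) I d"
proof -
  have "card {c \<in> mons (Suc k). mdeg (Suc k) c = d \<and> c(k := Suc (c k)) \<notin> I}
      \<le> hilb (Suc k) I d"
    unfolding hilb_def
  proof (rule card_mono)
    show "finite {a \<in> mons (Suc k). mdeg (Suc k) a = d \<and> a \<notin> I}"
      by (rule finite_subset[OF _ finite_mons_deg[of "Suc k" d]]) auto
  qed (use monomial_ideal_mdvd[OF mi _ mons_fun_upd[of k "Suc k"] mdvd_fun_upd_Suc] in blast)
  with assms(2) show ?thesis
    by (simp add: hilb_Suc_deg_Suc)
qed

lemma hilb_Suc_deg_eq:
  assumes ar: "almost_revlex (Suc k) I" and "hilb k I (Suc d) \<noteq> 0"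
  shows "hilb (Suc k) I (Suc d) = hilb k I (Suc d) + hilb (Suc k) I d"
proof -
  have mi: "monomial_ideal (Suc k) I"
    using ar unfolding almost_revlex_def by simp
  have "c(k := Suc (c k)) \<notin> I \<longleftrightarrow> c \<notin> I"
    if "c \<in> mons (Suc k)" "mdeg (Suc k) c = d" for c
  proof
    show "c(k := Suc (c k)) \<notin> I \<Longrightarrow> c \<notin> I"
      using monomial_ideal_mdvd[OF mi _ mons_fun_upd[OF _ that(1)] mdvd_fun_upd_Suc] by auto
    show "c \<notin> I \<Longrightarrow> c(k := Suc (c k)) \<notin> I"
      using hilb_eq_0_if_mult_last_var_mem[OF ar that(1)] that(2) assms(2) by auto
  qed
  then have "{c \<in> mons (Suc k). mdeg (Suc k) c = d \<and> c(k := Suc (c k)) \<notin> I}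
      = {a \<in> mons (Suc k). mdeg (Suc k) a = d \<and> a \<notin> I}"
    by blast
  then show ?thesis
    unfolding hilb_Suc_deg_Suc[of k I d] by (simp add: hilb_def)
qed

lemma hder_hilb_Suc:
  assumes ar: "almost_revlex (Suc k) I" and "hilb (Suc k) I 0 = 1"
  shows "hder (hilb (Suc k) I) 1 = hilb k I"
proof
  have mi: "monomial_ideal (Suc k) I"
    using ar unfolding almost_revlex_def by simp
  fix d
  show "hder (hilb (Suc k) I) 1 d = hilb k I d"
  proof (cases d)
    case 0
    then show ?thesis
      using assms(2) by (simp add: hilb_0 split: if_splits)
  next
    case (Suc e)
    then show ?thesis
      using hilb_Suc_deg_eq[OF ar, of e] hilb_Suc_deg_le[OF mi, of e]
      by (cases "hilb k I (Suc e) = 0") auto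
  qed
qed

lemma unimodal_hilb:
  assumes ar: "almost_revlex (Suc k) I"
  shows "unimodal (hilb (Suc k) I)"
  unfolding unimodal_def
proof (intro allI impI)
  fix d e
  assume "1 \<le> d" "d \<le> e" and le: "hilb (Suc k) I d \<le> hilb (Suc k) I (d - 1)"
  then obtain d' e' where de: "d = Suc d'" "e = Suc e'"
    by (cases d; cases e) auto
  have mi: "monomial_ideal (Suc k) I"
    using ar unfolding almost_revlex_def by simp
  have "hilb k I d = 0"
    using hilb_Suc_deg_eq[OF ar, of d'] le de by (cases "hilb k I d = 0") auto
  then have "hilb k I e = 0"
    using hilb_eq_0_mono[OF mi] \<open>d \<le> e\<close> by blast
  then show "hilb (Suc k) I e \<le> hilb (Suc k) I (e - 1)"
    using hilb_Suc_deg_le[OF mi, of e'] de by simp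
qed

lemma unimodal_hder_hilb:
  assumes "almost_revlex n I" "hilb n I 0 = 1"
  shows "unimodal (hder (hilb n I) i)"
  using assms
proof (induction n arbitrary: I i)
  case 0
  from 0(2) have "hilb 0 I = delta"
    by (rule hilb_no_vars)
  then show ?case
    by (simp add: hder_delta unimodal_delta)
next
  case (Suc k)
  note ar = Suc.prems(1) and IH = Suc.IH
  have h1: "hder (hilb (Suc k) I) 1 = hilb k (I \<inter> mons k)"
    using hder_hilb_Suc[OF Suc.prems] by (simp add: hilb_Int_mons)
  show ?case
  proof (cases i)
    case 0
    then show ?thesis
      using unimodal_hilb[OF ar] by simp
  next
    case (Suc j)
    have "hilb k (I \<inter> mons k) 0 = 1"
      using fun_cong[OF h1, of 0] by simp
    then show ?thesis
      unfolding Suc hder_Suc_eq[of _ j] h1 by (rule IH[OF almost_revlex_Int_mons[OF ar]])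
  qed
qed

section \<open>Lifting an ideal by one variable\<close>

text \<open>Data for lifting an almost reverse lexicographic ideal \<open>J\<close> in \<open>k\<close> variables with
  Hilbert function \<open>h\<^sup>(\<^sup>1\<^sup>)\<close> to one in \<open>k + 1\<close> variables with Hilbert function \<open>h\<close>.
  If \<open>falls\<close>, then \<open>peak\<close> is the last degree before \<open>h\<close> first fails to increase;
  otherwise \<open>h\<close> increases strictly throughout and \<open>peak\<close> is irrelevant.\<close>
locale lifting =
  fixes h :: "nat \<Rightarrow> nat" and J :: "(nat \<Rightarrow> nat) set" and k :: nat
    and falls :: bool and peak :: nat
  assumes h0: "h 0 = 1"
    and almost_revlex_J: "almost_revlex k J"
    and hilb_J: "hilb k J = hder h 1"
    and rising: "\<And>d. 1 \<le> d \<Longrightarrow> \<not> falls \<or> d \<le> peak \<Longrightarrow> h (d - 1) \<le> h d"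
    and falling: "\<And>d. falls \<Longrightarrow> peak < d \<Longrightarrow> h d \<le> h (d - 1)"
begin

lemma monomial_ideal_J: "monomial_ideal k J"
  using almost_revlex_J unfolding almost_revlex_def by simp

lemma h_rising_eq: "1 \<le> d \<Longrightarrow> \<not> falls \<or> d \<le> peak \<Longrightarrow> h d = hilb k J d + h (d - 1)"
  using rising[of d] by (simp add: hilb_J)

lemma h_antimono:
  assumes "falls" "peak \<le> d" "d \<le> e"
  shows "h e \<le> h d"
  using assms(3)
proof (induction e rule: dec_induct)
  case (step e)
  then show ?case
    using falling[OF assms(1), of "Suc e"] assms(2) by simp
qed simp

definition base_std :: "(nat \<Rightarrow> nat) \<Rightarrow> bool" where
  "base_std b \<longleftrightarrow> b(k := 0) \<notin> J"

definition peak_std :: "(nat \<Rightarrow> nat) set" where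
  "peak_std = {a \<in> mons (Suc k). mdeg (Suc k) a = peak \<and> base_std a}"

text \<open>Above the peak, a standard monomial of degree \<open>d\<close> arises from one of the \<open>h d\<close>
  reverse lexicographically smallest elements of \<open>peak_std\<close> by raising the exponent of
  the last variable until the degree is \<open>d\<close>.\<close>
definition lifted_std :: "(nat \<Rightarrow> nat) \<Rightarrow> bool" where
  "lifted_std b \<longleftrightarrow> mdeg k b \<le> peak \<and>
     b(k := peak - mdeg k b) \<in> lowest (rlex_gt (Suc k)) peak_std (h (mdeg (Suc k) b))"

definition std :: "(nat \<Rightarrow> nat) \<Rightarrow> bool" where
  "std b \<longleftrightarrow> (if falls \<and> peak < mdeg (Suc k) b then lifted_std b else base_std b)"

definition lifted_ideal :: "(nat \<Rightarrow> nat) set" where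
  "lifted_ideal = {b \<in> mons (Suc k). \<not> std b}"

lemma finite_strict_total_peak_std: "finite_strict_total (rlex_gt (Suc k)) peak_std"
proof (rule finite_strict_total_rlex_gt)
  show "finite peak_std"
    unfolding peak_std_def by (rule finite_subset[OF _ finite_mons_deg[of "Suc k" peak]]) auto
qed (auto simp: peak_std_def)

lemma base_std_fun_upd_last [simp]: "base_std (b(k := v)) \<longleftrightarrow> base_std b"
  unfolding base_std_def by simp

lemma base_std_mdvd:
  assumes "mdvd a b" "b \<in> mons (Suc k)" "base_std b"
  shows "base_std a"
proof -
  have "mdvd (a(k := 0)) (b(k := 0))" "b(k := 0) \<in> mons k"
    using assms(1,2) mons_Suc_iff unfolding mdvd_def by auto
  then show ?thesis
    using assms(3) monomial_ideal_mdvd[OF monomial_ideal_J] unfolding base_std_def by blast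
qed

lemma card_base_std:
  "\<not> falls \<or> d \<le> peak \<Longrightarrow> card {b \<in> mons (Suc k). mdeg (Suc k) b = d \<and> base_std b} = h d"
proof (induction d)
  case 0
  have "(\<lambda>_. 0) \<notin> J"
    using fun_cong[OF hilb_J, of 0] by (simp add: hilb_0 split: if_splits)
  then have "{b \<in> mons (Suc k). mdeg (Suc k) b = 0 \<and> base_std b} = {\<lambda>_. 0}"
    using mdeg_eq_0_iff[of _ "Suc k"] unfolding base_std_def by (auto simp: mons_def fun_upd_def)
  then show ?case
    using h0 by simp
next
  case (Suc d)
  have "{b \<in> mons k. mdeg k b = Suc d \<and> base_std b} = {b \<in> mons k. mdeg k b = Suc d \<and> b \<notin> J}"
    unfolding base_std_def using mons_eq_0 by (metis fun_upd_triv order_refl)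
  then have "card {b \<in> mons (Suc k). mdeg (Suc k) b = Suc d \<and> base_std b} =
      hilb k J (Suc d) + card {c \<in> mons (Suc k). mdeg (Suc k) c = d \<and> base_std c}"
    using card_mons_Suc_deg_Suc[of k d base_std] by (simp add: hilb_def)
  then show ?case
    using Suc h_rising_eq[of "Suc d"] by auto
qed

lemma card_peak_std: "falls \<Longrightarrow> card peak_std = h peak"
  unfolding peak_std_def using card_base_std[of peak] by simp

lemma lifted_std_imp_base_std:
  assumes "lifted_std b"
  shows "base_std b"
proof -
  have "b(k := peak - mdeg k b) \<in> peak_std"
    using assms lowest_subset[of "rlex_gt (Suc k)" peak_std] unfolding lifted_std_def by blast
  then show ?thesis
    unfolding peak_std_def by simp
qed

lemma std_imp_base_std: "std b \<Longrightarrow> base_std b"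
  unfolding std_def using lifted_std_imp_base_std by (auto split: if_splits)

lemma lifted_std_mdvd:
  assumes dvd: "mdvd a b" and a: "a \<in> mons (Suc k)" and b: "b \<in> mons (Suc k)"
    and "falls" "peak < mdeg (Suc k) a" and lifted_b: "lifted_std b"
  shows "lifted_std a"
proof -
  interpret finite_strict_total "rlex_gt (Suc k)" peak_std
    by (rule finite_strict_total_peak_std)
  let ?low = "lowest (rlex_gt (Suc k)) peak_std"
  have deg: "mdeg k a \<le> mdeg k b" "mdeg (Suc k) a \<le> mdeg (Suc k) b"
    using dvd by (simp_all add: mdvd_imp_mdeg_le)
  have "mdeg k b \<le> peak" and b_low: "b(k := peak - mdeg k b) \<in> ?low (h (mdeg (Suc k) b))"
    using lifted_b unfolding lifted_std_def by auto
  then have "mdeg k a \<le> peak"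
    using deg by simp
  have a_peak: "a(k := peak - mdeg k a) \<in> peak_std"
    using a \<open>mdeg k a \<le> peak\<close> base_std_mdvd[OF dvd b lifted_std_imp_base_std[OF lifted_b]]
    unfolding peak_std_def by (simp add: mons_fun_upd mdeg_fun_upd_last)
  moreover have "a(k := peak - mdeg k a) \<in> ?low (h (mdeg (Suc k) b))"
  proof (cases "mdeg k a = mdeg k b")
    case True
    have "mdvd (a(k := 0)) (b(k := 0))" "a(k := 0) \<in> mons k" "b(k := 0) \<in> mons k"
      using dvd a b mons_Suc_iff unfolding mdvd_def by auto
    moreover have "mdeg k (a(k := 0)) = mdeg k (b(k := 0))"
      using True by (simp add: mdeg_fun_upd_ge)
    ultimately have "a(k := 0) = b(k := 0)"
      by (rule mdvd_mdeg_eq_imp_eq)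
    then have "a(k := x) = b(k := x)" for x
      by (metis fun_upd_upd)
    with True b_low show ?thesis
      by simp
  next
    case False
    then have "rlex_gt (Suc k) (b(k := peak - mdeg k b)) (a(k := peak - mdeg k a))"
      using deg \<open>mdeg k b \<le> peak\<close> by (intro rlex_gt_Suc_last_less) simp
    with b_low a_peak show ?thesis
      by (rule lowest_down_closed)
  qed
  moreover have "?low (h (mdeg (Suc k) b)) \<subseteq> ?low (h (mdeg (Suc k) a))"
    using h_antimono \<open>falls\<close> \<open>peak < mdeg (Suc k) a\<close> deg by (simp add: lowest_mono)
  ultimately show ?thesis
    unfolding lifted_std_def using \<open>mdeg k a \<le> peak\<close> by blast
qed

lemma monomial_ideal_lifted: "monomial_ideal (Suc k) lifted_ideal"
  unfolding monomial_ideal_def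
proof (intro conjI ballI impI)
  show "lifted_ideal \<subseteq> mons (Suc k)"
    unfolding lifted_ideal_def by blast
  fix a b assume a: "a \<in> lifted_ideal" and b: "b \<in> mons (Suc k)" and dvd: "mdvd a b"
  show "b \<in> lifted_ideal"
  proof (rule ccontr)
    assume "b \<notin> lifted_ideal"
    then have std_b: "std b"
      using b unfolding lifted_ideal_def by simp
    have "a \<in> mons (Suc k)" "\<not> std a"
      using a unfolding lifted_ideal_def by auto
    moreover have "base_std a"
      using base_std_mdvd[OF dvd b std_imp_base_std[OF std_b]] .
    moreover have "lifted_std a" if "falls" "peak < mdeg (Suc k) a"
    proof (rule lifted_std_mdvd[OF dvd _ b that])
      show "lifted_std b"
        using std_b that mdvd_imp_mdeg_le[OF dvd, of "Suc k"] unfolding std_def by auto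
    qed (use \<open>a \<in> mons (Suc k)\<close> in simp)
    ultimately show False
      unfolding std_def by (auto split: if_splits)
  qed
qed

lemma min_gen_lifted_not_base_std:
  assumes N: "min_gen lifted_ideal N" and "\<not> base_std N"
  shows "N k = 0"
proof (rule ccontr)
  assume "N k \<noteq> 0"
  have "N \<in> mons (Suc k)"
    using N unfolding min_gen_def lifted_ideal_def by simp
  then have "N(k := N k - 1) \<in> lifted_ideal"
    using assms(2) std_imp_base_std[of "N(k := N k - 1)"]
    unfolding lifted_ideal_def by (auto simp: mons_fun_upd)
  with min_gen_fun_upd_pred[OF N \<open>N k \<noteq> 0\<close>] show False
    by blast
qed

lemma not_std_if_rlex_gt_min_gen_low:
  assumes M: "M \<in> mons (Suc k)" and N: "min_gen lifted_ideal N"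
    and low: "\<not> (falls \<and> peak < mdeg (Suc k) N)"
    and deg: "mdeg (Suc k) M = mdeg (Suc k) N" and gt: "rlex_gt (Suc k) M N"
  shows "\<not> std M"
proof -
  have "N \<in> mons (Suc k)" "\<not> std N"
    using N unfolding min_gen_def lifted_ideal_def by auto
  then have "\<not> base_std N"
    using low unfolding std_def by simp
  then have "N k = 0"
    by (rule min_gen_lifted_not_base_std[OF N])
  then have "M k = 0"
    using rlex_gt_Suc_last_le[OF gt] by simp
  have "M \<in> mons k"
    using mons_Suc_last_eq_0[OF M] \<open>M k = 0\<close> by simp
  have "N \<in> J"
    using \<open>\<not> base_std N\<close> \<open>N k = 0\<close> unfolding base_std_def by (metis fun_upd_triv)
  have "min_gen J N"
    unfolding min_gen_def
  proof (intro conjI ballI impI \<open>N \<in> J\<close>)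
    fix G assume G: "G \<in> J" "mdvd G N"
    have "G \<in> mons k"
      using monomial_ideal_subset[OF monomial_ideal_J G(1)] .
    then have "G \<in> mons (Suc k)" "\<not> base_std G"
      using G(1) mons_eq_0[of G k k] unfolding base_std_def by (auto intro: mons_Suc_mono simp: fun_upd_idem)
    moreover have "\<not> (falls \<and> peak < mdeg (Suc k) G)"
      using low mdvd_imp_mdeg_le[OF G(2), of "Suc k"] by auto
    ultimately have "G \<in> lifted_ideal"
      unfolding lifted_ideal_def std_def by auto
    with N G(2) show "G = N"
      unfolding min_gen_def by blast
  qed
  moreover have "mdeg k M = mdeg k N" "revlex_gt k M N"
    using deg gt \<open>M k = 0\<close> \<open>N k = 0\<close>
    by (simp_all add: mdeg_Suc revlex_gt_iff_rlex_gt rlex_gt_Suc_iff)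
  ultimately have "M \<in> J"
    using almost_revlex_J \<open>M \<in> mons k\<close> unfolding almost_revlex_def by blast
  then show ?thesis
    using low deg \<open>M k = 0\<close> unfolding std_def base_std_def by (auto simp: fun_upd_idem)
qed

lemma not_std_if_rlex_gt_min_gen_high:
  assumes M: "M \<in> mons (Suc k)" and N: "min_gen lifted_ideal N"
    and high: "falls" "peak < mdeg (Suc k) N"
    and deg: "mdeg (Suc k) M = mdeg (Suc k) N" and gt: "rlex_gt (Suc k) M N"
  shows "\<not> std M"
proof
  interpret finite_strict_total "rlex_gt (Suc k)" peak_std
    by (rule finite_strict_total_peak_std)
  let ?d = "mdeg (Suc k) N"
  let ?low = "lowest (rlex_gt (Suc k)) peak_std (h ?d)"
  assume "std M"
  then have "mdeg k M \<le> peak" and M_low: "M(k := peak - mdeg k M) \<in> ?low"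
    using high deg unfolding std_def lifted_std_def by auto
  have N_mons: "N \<in> mons (Suc k)" "\<not> std N"
    using N unfolding min_gen_def lifted_ideal_def by auto
  have "M k \<le> N k"
    by (rule rlex_gt_Suc_last_le[OF gt])
  then have "mdeg k N \<le> peak"
    using deg \<open>mdeg k M \<le> peak\<close> by (simp add: mdeg_Suc)
  have "peak - mdeg k M = M k - (?d - peak)" "peak - mdeg k N = N k - (?d - peak)"
    using deg high(2) \<open>mdeg k M \<le> peak\<close> \<open>mdeg k N \<le> peak\<close> mdeg_Suc[of k M] mdeg_Suc[of k N]
    by arith+
  then have "M(k := peak - mdeg k M) = M(k := M k - (?d - peak))"
    "N(k := peak - mdeg k N) = N(k := N k - (?d - peak))"
    by simp_all
  moreover have "?d - peak \<le> M k" "?d - peak \<le> N k"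
    using deg \<open>mdeg k M \<le> peak\<close> \<open>mdeg k N \<le> peak\<close> by (simp_all add: mdeg_Suc)
  ultimately have gt': "rlex_gt (Suc k) (M(k := peak - mdeg k M)) (N(k := peak - mdeg k N))"
    using rlex_gt_Suc_fun_upd_last[OF gt] by simp
  have "N(k := peak - mdeg k N) \<notin> ?low"
    using N_mons(2) high \<open>mdeg k N \<le> peak\<close> unfolding std_def lifted_std_def by simp
  then have "N(k := peak - mdeg k N) \<notin> peak_std"
    using lowest_down_closed[OF M_low _ gt'] by blast
  then have "\<not> base_std N"
    using N_mons(1) \<open>mdeg k N \<le> peak\<close>
    unfolding peak_std_def by (simp add: mons_fun_upd mdeg_fun_upd_last)
  then have "N k = 0"
    by (rule min_gen_lifted_not_base_std[OF N])
  with high(2) \<open>mdeg k N \<le> peak\<close> show False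
    by (simp add: mdeg_Suc)
qed

lemma almost_revlex_lifted: "almost_revlex (Suc k) lifted_ideal"
  unfolding almost_revlex_def
proof (intro conjI monomial_ideal_lifted ballI allI impI)
  fix M N
  assume M: "M \<in> mons (Suc k)" and N: "min_gen lifted_ideal N"
    and deg: "mdeg (Suc k) M = mdeg (Suc k) N" and gt: "revlex_gt (Suc k) M N"
  then have "rlex_gt (Suc k) M N"
    by (simp add: revlex_gt_iff_rlex_gt)
  then have "\<not> std M"
    using not_std_if_rlex_gt_min_gen_low[OF M N _ deg] not_std_if_rlex_gt_min_gen_high[OF M N _ _ deg]
    by blast
  with M show "M \<in> lifted_ideal"
    unfolding lifted_ideal_def by simp
qed

lemma hilb_lifted: "hilb (Suc k) lifted_ideal d = h d"
proof -
  interpret finite_strict_total "rlex_gt (Suc k)" peak_std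
    by (rule finite_strict_total_peak_std)
  have "hilb (Suc k) lifted_ideal d = card {b \<in> mons (Suc k). mdeg (Suc k) b = d \<and> std b}"
    unfolding hilb_def lifted_ideal_def by (intro arg_cong[where f = card]) auto
  also have "\<dots> = h d"
  proof (cases "falls \<and> peak < d")
    case False
    then have "{b \<in> mons (Suc k). mdeg (Suc k) b = d \<and> std b} =
        {b \<in> mons (Suc k). mdeg (Suc k) b = d \<and> base_std b}"
      unfolding std_def by auto
    with False show ?thesis
      using card_base_std[of d] by auto
  next
    case True
    let ?low = "lowest (rlex_gt (Suc k)) peak_std (h d)"
    have low: "a \<in> mons (Suc k)" "mdeg k a \<le> peak" "a(k := peak - mdeg k a) = a"
      if "a \<in> ?low" for a
      using that lowest_subset[of "rlex_gt (Suc k)" peak_std "h d"] unfolding peak_std_def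
      by (auto simp: mdeg_Suc)
    have "bij_betw (\<lambda>b. b(k := peak - mdeg k b))
        {b \<in> mons (Suc k). mdeg (Suc k) b = d \<and> std b} ?low"
    proof (rule bij_betw_byWitness[where f' = "\<lambda>a. a(k := d - mdeg k a)"])
      show "(\<lambda>b. b(k := peak - mdeg k b)) ` {b \<in> mons (Suc k). mdeg (Suc k) b = d \<and> std b} \<subseteq> ?low"
        using True unfolding std_def lifted_std_def by auto
      show "(\<lambda>a. a(k := d - mdeg k a)) ` ?low \<subseteq> {b \<in> mons (Suc k). mdeg (Suc k) b = d \<and> std b}"
      proof (rule image_subsetI)
        fix a assume a: "a \<in> ?low"
        with True low[OF a] show "a(k := d - mdeg k a) \<in> {b \<in> mons (Suc k). mdeg (Suc k) b = d \<and> std b}"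
          unfolding std_def lifted_std_def by (simp add: mons_fun_upd mdeg_fun_upd_last mdeg_fun_upd_ge)
      qed
    qed (auto simp: mdeg_Suc mdeg_fun_upd_ge low)
    then have "card {b \<in> mons (Suc k). mdeg (Suc k) b = d \<and> std b} = card ?low"
      by (rule bij_betw_same_card)
    also have "\<dots> = h d"
      using card_lowest card_peak_std h_antimono[of peak d] True by simp
    finally show ?thesis .
  qed
  finally show ?thesis .
qed

end

lemma almost_revlex_no_vars: "almost_revlex 0 {}"
  unfolding almost_revlex_def monomial_ideal_def min_gen_def by simp

lemma exists_almost_revlex_hilb:
  assumes "h 0 = 1" "h 1 = n" "\<forall>i. unimodal (hder h i)"
  shows "\<exists>I. almost_revlex n I \<and> hilb n I = h"
  using assms
proof (induction n arbitrary: h)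
  case 0
  then have "h = delta"
    using unimodal_eq_delta[of h] spec[OF 0(3), of 0] by simp
  moreover have "hilb 0 {} = delta"
    by (rule hilb_no_vars) (simp add: hilb_0)
  ultimately show ?case
    using almost_revlex_no_vars by auto
next
  case (Suc k)
  have "\<forall>i. unimodal (hder (hder h 1) i)"
  proof
    fix i
    show "unimodal (hder (hder h 1) i)"
      using spec[OF Suc.prems(3), of "Suc i"] by (simp only: hder_Suc_eq)
  qed
  moreover have "hder h 1 0 = 1" "hder h 1 1 = k"
    using Suc.prems(1,2) hder_at_1[of h 1] by simp_all
  ultimately obtain J where J: "almost_revlex k J" "hilb k J = hder h 1"
    using Suc.IH by blast
  have unimodal_h: "unimodal h"
    using spec[OF Suc.prems(3), of 0] by simp
  define falls where "falls \<longleftrightarrow> (\<exists>d\<ge>1. h d \<le> h (d - 1))"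
  define r where "r = (LEAST d. d \<ge> 1 \<and> h d \<le> h (d - 1))"
  have r: "1 \<le> r" "h r \<le> h (r - 1)" if "falls"
    using LeastI_ex[of "\<lambda>d. d \<ge> 1 \<and> h d \<le> h (d - 1)"] that
    unfolding falls_def r_def by auto
  interpret lifting h J k falls "r - 1"
  proof
    fix d
    assume d: "1 \<le> d" "\<not> falls \<or> d \<le> r - 1"
    show "h (d - 1) \<le> h d"
    proof (rule ccontr)
      assume "\<not> h (d - 1) \<le> h d"
      with d(1) have "falls" "r \<le> d"
        unfolding falls_def r_def by (auto intro: Least_le)
      with d r show False
        by simp
    qed
  next
    fix d
    assume "falls" "r - 1 < d"
    then show "h d \<le> h (d - 1)"
      using unimodalD[OF unimodal_h r] by simp
  qed (use Suc.prems J in auto)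
  show ?case
    using almost_revlex_lifted hilb_lifted Suc.prems(2) by auto
qed

theorem corollary3p10:
  fixes h :: "nat \<Rightarrow> nat"
  assumes "h 0 = 1"
  shows "unimodal_at_each_tail h \<longleftrightarrow>
         (\<exists>n I. almost_revlex n I \<and> (\<forall>d. hilb n I d = h d))"
proof -
  have "unimodal_at_each_tail h \<longleftrightarrow> (\<forall>i. unimodal (hder h i))"
    using assms by (rule unimodal_at_each_tail_iff)
  also have "\<dots> \<longleftrightarrow> (\<exists>n I. almost_revlex n I \<and> hilb n I = h)"
  proof
    assume "\<forall>i. unimodal (hder h i)"
    then show "\<exists>n I. almost_revlex n I \<and> hilb n I = h"
      using exists_almost_revlex_hilb[of h "h 1"] assms by blast
  next
    assume "\<exists>n I. almost_revlex n I \<and> hilb n I = h"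
    then obtain n I where ar: "almost_revlex n I" and hilb_eq: "hilb n I = h"
      by blast
    have "hilb n I 0 = 1"
      using hilb_eq assms by simp
    with ar hilb_eq show "\<forall>i. unimodal (hder h i)"
      using unimodal_hder_hilb by blast
  qed
  finally show ?thesis
    unfolding fun_eq_iff .
qed

end
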